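(* For every normed BPA system $\mathcal{G}=(V,\mathit{Act},\mathcal{R})$ (with $V$ linearly ordered) and all $\alpha,\beta\in V^*$: $\mathcal{T}^\mathcal{G}(\alpha)=\mathcal{T}^\mathcal{G}(\beta)$ if and only if $\alpha\sim\beta$ in $\mathcal{L}_\mathcal{G}$.
   Context: BPA system $\mathcal{G}=(V,\mathit{Act},\mathcal{R})$: finite variables $V$, finite actions (possibly with silent $\tau$), rules $A\xrightarrow{a}\alpha$; LTS $\mathcal{L}_\mathcal{G}$ on $V^*$ with $A\beta\xrightarrow{a}\alpha\beta$ for rules $A\xrightarrow{a}\alpha$. Normed: each variable can reach $\varepsilon$. $\sim$: branching bisimilarity in $\mathcal{L}_\mathcal{G}$ (largest relation $\mathcal{B}$ such that for $(s,t)\in\mathcal{B}$ each move $s\xrightarrow{a}s'$ is matched by $a=\tau,(s',t)\in\mathcal{B}$, or by $t=t_0\xrightarrow{\tau}\cdots\xrightarrow{\tau}t_k\xrightarrow{a}t'$ with $(s',t')\in\mathcal{B}$ and $(s,t_i)\in\mathcal{B}$ for $i\in[1,k]$; and symmetrically). Transducers read right to left: $q'\xleftarrow{A/\gamma}q$ means $\Delta(q,A)=(q',\gamma)$, extended to strings by $q\xleftarrow{\varepsilon/\varepsilon}q$ and composition ($q'\xleftarrow{A/\gamma}q$, $q''\xleftarrow{\alpha/\beta}q'$ give $q''\xleftarrow{\alpha A/\beta\gamma}q$); $\mathcal{T}_q(\alpha)$ is the output from $q$ on $\alpha$, $\mathcal{T}(\alpha)=\mathcal{T}_{q_0}(\alpha)$.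 Canonical transducer: $R_\gamma=\{X\in V\mid X\gamma\sim\gamma\}$; prefix $\alpha$ of $\alpha\gamma$ is redundancy-free if not of the form $\delta X\beta$ with $X\beta\gamma\sim\beta\gamma$; $\alpha$ lexicographically smaller than $\beta$ if $\alpha$ is a proper suffix of $\beta$ or $\alpha=\alpha'A\gamma,\beta=\beta'B\gamma$ with $A<B$. $\mathcal{T}^\mathcal{G}=(Q,V,\Delta,q_0)$: $Q=\{R_\gamma\mid\gamma\in V^*\}$, $q_0=R_\varepsilon$, $\Delta(R_\gamma,A)=(R_{A\gamma},\alpha)$ where $\alpha$ is lexicographically smallest among the longest strings with $\alpha\gamma\sim A\gamma$ and $\alpha$ a redundancy-free prefix of $\alpha\gamma$ (well defined, depends only on $R_\gamma$). *)

theory Defs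
  imports Main
begin

(* A BPA system: variables are the elements of a finite linearly ordered type 'v,
   actions are 'a option with None standing for the silent action tau,
   rules are triples (A, a, alpha) meaning A --a--> alpha. *)

type_synonym ('v, 'a) bpa_rules = "('v \<times> 'a option \<times> 'v list) set"

definition bpa_step :: "('v, 'a) bpa_rules \<Rightarrow> 'v list \<Rightarrow> 'a option \<Rightarrow> 'v list \<Rightarrow> bool" where
  "bpa_step R s a t \<longleftrightarrow> (\<exists>A \<alpha> \<beta>. s = A # \<beta> \<and> (A, a, \<alpha>) \<in> R \<and> t = \<alpha> @ \<beta>)"

definition normed :: "('v, 'a) bpa_rules \<Rightarrow> bool" where
  "normed R \<longleftrightarrow> (\<forall>A. (\<lambda>s t. \<exists>a. bpa_step R s a t)\<^sup>*\<^sup>* [A] [])"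

inductive tau_path :: "('v, 'a) bpa_rules \<Rightarrow> ('v list \<times> 'v list) set \<Rightarrow> 'v list \<Rightarrow> 'v list \<Rightarrow> 'v list \<Rightarrow> bool"
  for R B s where
  tp_refl: "tau_path R B s t t"
| tp_step: "tau_path R B s t u \<Longrightarrow> bpa_step R u None u' \<Longrightarrow> (s, u') \<in> B \<Longrightarrow> tau_path R B s t u'"

definition bb_half :: "('v, 'a) bpa_rules \<Rightarrow> ('v list \<times> 'v list) set \<Rightarrow> bool" where
  "bb_half R B \<longleftrightarrow> (\<forall>s t. (s, t) \<in> B \<longrightarrow> (\<forall>a s'. bpa_step R s a s' \<longrightarrow>
      ((a = None \<and> (s', t) \<in> B) \<or>
       (\<exists>tk t'. tau_path R B s t tk \<and> bpa_step R tk a t' \<and> (s', t') \<in> B))))"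

definition branching_bisim :: "('v, 'a) bpa_rules \<Rightarrow> ('v list \<times> 'v list) set \<Rightarrow> bool" where
  "branching_bisim R B \<longleftrightarrow> bb_half R B \<and> bb_half R (B\<inverse>)"

definition bbisim :: "('v, 'a) bpa_rules \<Rightarrow> 'v list \<Rightarrow> 'v list \<Rightarrow> bool" where
  "bbisim R s t \<longleftrightarrow> (\<exists>B. branching_bisim R B \<and> (s, t) \<in> B)"

definition Rset :: "('v, 'a) bpa_rules \<Rightarrow> 'v list \<Rightarrow> 'v set" where
  "Rset R \<gamma> = {X. bbisim R (X # \<gamma>) \<gamma>}"

definition redfree :: "('v, 'a) bpa_rules \<Rightarrow> 'v list \<Rightarrow> 'v list \<Rightarrow> bool" where
  "redfree R \<gamma> \<alpha> \<longleftrightarrow> \<not> (\<exists>\<delta> X \<beta>. \<alpha> = \<delta> @ X # \<beta> \<and> bbisim R (X # \<beta> @ \<gamma>) (\<beta> @ \<gamma>))"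

definition lexless :: "'v::linorder list \<Rightarrow> 'v list \<Rightarrow> bool" where
  "lexless \<alpha> \<beta> \<longleftrightarrow> (\<exists>\<delta>. \<delta> \<noteq> [] \<and> \<beta> = \<delta> @ \<alpha>) \<or>
     (\<exists>\<alpha>' \<beta>' A B \<gamma>. \<alpha> = \<alpha>' @ A # \<gamma> \<and> \<beta> = \<beta>' @ B # \<gamma> \<and> A < B)"

definition out_cands :: "('v, 'a) bpa_rules \<Rightarrow> 'v list \<Rightarrow> 'v \<Rightarrow> 'v list set" where
  "out_cands R \<gamma> A = {\<alpha>. bbisim R (\<alpha> @ \<gamma>) (A # \<gamma>) \<and> redfree R \<gamma> \<alpha>}"

definition longest_cands :: "('v, 'a) bpa_rules \<Rightarrow> 'v list \<Rightarrow> 'v \<Rightarrow> 'v list set" where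
  "longest_cands R \<gamma> A = {\<alpha> \<in> out_cands R \<gamma> A. \<forall>\<beta> \<in> out_cands R \<gamma> A. length \<beta> \<le> length \<alpha>}"

definition canon_out :: "('v::linorder, 'a) bpa_rules \<Rightarrow> 'v list \<Rightarrow> 'v \<Rightarrow> 'v list" where
  "canon_out R \<gamma> A = (THE \<alpha>. \<alpha> \<in> longest_cands R \<gamma> A \<and>
      (\<forall>\<beta> \<in> longest_cands R \<gamma> A. \<beta> \<noteq> \<alpha> \<longrightarrow> lexless \<alpha> \<beta>))"

(* transition function of the canonical transducer on states q = R_gamma,
   computed via a representative gamma of q *)
definition canon_delta :: "('v::linorder, 'a) bpa_rules \<Rightarrow> 'v set \<Rightarrow> 'v \<Rightarrow> 'v set \<times> 'v list" where
  "canon_delta R q A = (let \<gamma> = (SOME \<gamma>. Rset R \<gamma> = q) in (Rset R (A # \<gamma>), canon_out R \<gamma> A))"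

(* run of the transducer reading right to left: returns (final state, output) *)
fun trans_run :: "('v::linorder, 'a) bpa_rules \<Rightarrow> 'v set \<Rightarrow> 'v list \<Rightarrow> 'v set \<times> 'v list" where
  "trans_run R q [] = (q, [])"
| "trans_run R q (A # w) = (let (q1, o1) = trans_run R q w; (q2, o2) = canon_delta R q1 A in (q2, o2 @ o1))"

definition canon_T :: "('v::linorder, 'a) bpa_rules \<Rightarrow> 'v list \<Rightarrow> 'v list" where
  "canon_T R w = snd (trans_run R (Rset R []) w)"

end

theory Submission
  imports Defs "HOL-Library.List_Lexorder"
begin

text \<open>
  \<open>R\<^sub>\<gamma>\<close> determines every equation \<open>\<alpha> \<gamma> \<sim> \<beta> \<gamma>\<close>: if \<open>R\<^sub>\<gamma>\<^sub>1 = R\<^sub>\<gamma>\<^sub>2\<close>, replaying above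
  \<open>\<gamma>2\<close> the moves made above \<open>\<gamma>1\<close> is a branching bisimulation, the branching norm
  controlling the moves that reach \<open>\<gamma>1\<close>. So every step of the transducer depends on its
  state only, its output \<open>T(w)\<close> can be computed along the suffixes of \<open>w\<close>, and letter by
  letter \<open>T(w) \<sim> w\<close>; hence equal outputs mean bisimilar inputs.

  Conversely, every letter \<open>X\<close> of \<open>T(w)\<close> is prime above its suffix \<open>u\<close>: a longer
  redundancy-free replacement of \<open>X\<close> would be a longer output candidate, a smaller
  variable a lexicographically smaller one. Words of primes are determined by their
  bisimilarity class: if \<open>X u \<sim> Y v\<close> and the norm of \<open>u\<close> is at most that of \<open>v\<close>,
  matching the run of \<open>Y v\<close> down to \<open>v\<close> from \<open>X u\<close> gives \<open>v \<sim> \<delta> u\<close>, and primality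
  of \<open>X\<close> forces \<open>\<delta> = \<epsilon>\<close>. Hence \<open>u \<sim> v\<close>, so \<open>u = v\<close> by induction, and minimality
  gives \<open>X = Y\<close>.
\<close>

section \<open>Branching bisimilarity\<close>

abbreviation bbisim_rel :: "('v, 'a) bpa_rules \<Rightarrow> ('v list \<times> 'v list) set" where
  "bbisim_rel R \<equiv> {(s, t). bbisim R s t}"

abbreviation reaches :: "('v, 'a) bpa_rules \<Rightarrow> 'v list \<Rightarrow> 'v list \<Rightarrow> bool" where
  "reaches R \<equiv> (\<lambda>s t. \<exists>a. bpa_step R s a t)\<^sup>*\<^sup>*"

abbreviation reaches_within :: "('v, 'a) bpa_rules \<Rightarrow> ('v list \<Rightarrow> bool) \<Rightarrow> 'v list \<Rightarrow> 'v list \<Rightarrow> bool" where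
  "reaches_within R P \<equiv> (\<lambda>s t. (\<exists>a. bpa_step R s a t) \<and> P t)\<^sup>*\<^sup>*"

context
  fixes R :: "('v, 'a) bpa_rules"
begin

lemma bpa_step_Nil [simp]: "\<not> bpa_step R [] a t"
  by (simp add: bpa_step_def)

lemma bpa_step_Cons: "bpa_step R (A # \<beta>) a t \<longleftrightarrow> (\<exists>\<alpha>. (A, a, \<alpha>) \<in> R \<and> t = \<alpha> @ \<beta>)"
  by (auto simp add: bpa_step_def)

lemma bpa_step_append: "bpa_step R s a t \<Longrightarrow> bpa_step R (s @ \<beta>) a (t @ \<beta>)"
  by (auto simp add: bpa_step_def)

lemma tau_path_mono: "tau_path R B s t u \<Longrightarrow> B \<subseteq> B' \<Longrightarrow> tau_path R B' s t u"
  by (induction rule: tau_path.induct) (auto intro: tau_path.intros)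

lemma tau_path_in_rel: "tau_path R B s t u \<Longrightarrow> (s, t) \<in> B \<Longrightarrow> (s, u) \<in> B"
  by (induction rule: tau_path.induct) auto

lemma tau_path_trans: "tau_path R B s b c \<Longrightarrow> tau_path R B s a b \<Longrightarrow> tau_path R B s a c"
  by (induction rule: tau_path.induct) (auto intro: tau_path.intros)

lemma tau_path_Nil: "tau_path R B s t u \<Longrightarrow> t = [] \<Longrightarrow> u = []"
  by (induction rule: tau_path.induct) auto

lemma bb_half_Union:
  assumes "\<And>B. B \<in> \<B> \<Longrightarrow> bb_half R B"
  shows "bb_half R (\<Union>\<B>)"
  unfolding bb_half_def
proof (intro allI impI)
  fix s t a s' assume "(s, t) \<in> \<Union>\<B>" and step: "bpa_step R s a s'"
  then obtain B where B: "B \<in> \<B>" "(s, t) \<in> B" by blast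
  with assms step have "(a = None \<and> (s', t) \<in> B) \<or>
      (\<exists>tk t'. tau_path R B s t tk \<and> bpa_step R tk a t' \<and> (s', t') \<in> B)"
    unfolding bb_half_def by blast
  moreover have "B \<subseteq> \<Union>\<B>" using B(1) by blast
  ultimately show "(a = None \<and> (s', t) \<in> \<Union>\<B>) \<or>
      (\<exists>tk t'. tau_path R (\<Union>\<B>) s t tk \<and> bpa_step R tk a t' \<and> (s', t') \<in> \<Union>\<B>)"
    using tau_path_mono by blast
qed

lemma branching_bisim_bbisim_rel: "branching_bisim R (bbisim_rel R)"
proof -
  have "bbisim_rel R = \<Union>{B. branching_bisim R B}"
    by (auto simp: bbisim_def)
  moreover have "(bbisim_rel R)\<inverse> = \<Union>{B\<inverse> | B. branching_bisim R B}"
    by (auto simp: bbisim_def)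
  ultimately show ?thesis
    unfolding branching_bisim_def by (auto intro!: bb_half_Union simp: branching_bisim_def)
qed

lemma bbisim_match:
  assumes "bbisim R s t" "bpa_step R s a s'"
  shows "(a = None \<and> bbisim R s' t) \<or>
    (\<exists>tk t'. tau_path R (bbisim_rel R) s t tk \<and> bpa_step R tk a t' \<and> bbisim R s' t')"
  using branching_bisim_bbisim_rel assms unfolding branching_bisim_def bb_half_def by blast

lemma bbisim_refl: "bbisim R s s"
proof -
  have "bb_half R Id" unfolding bb_half_def by (auto intro: tau_path.intros)
  then show ?thesis unfolding bbisim_def branching_bisim_def by auto
qed

lemma bbisim_sym: "bbisim R s t \<Longrightarrow> bbisim R t s"
  unfolding bbisim_def branching_bisim_def by (metis converse_converse converse_iff)

lemma tau_path_relcomp_lift: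
  "tau_path R B2 x a b \<Longrightarrow> (s, x) \<in> B1 \<Longrightarrow> tau_path R (B1 O B2) s a b"
  by (induction rule: tau_path.induct) (auto intro: tau_path.intros)

lemma tau_path_relcomp:
  assumes half: "bb_half R B2"
  shows "tau_path R B1 s t tk \<Longrightarrow> (s, t) \<in> B1 \<Longrightarrow> (t, u) \<in> B2 \<Longrightarrow>
    \<exists>uk. tau_path R (B1 O B2) s u uk \<and> (tk, uk) \<in> B2"
proof (induction rule: tau_path.induct)
  case (tp_refl t)
  then show ?case by (auto intro: tau_path.intros)
next
  case (tp_step t x x')
  then obtain uk where uk: "tau_path R (B1 O B2) s u uk" "(x, uk) \<in> B2" by blast
  have sx: "(s, x) \<in> B1" using tau_path_in_rel tp_step by metis
  from half uk(2) tp_step(2) have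
    "(x', uk) \<in> B2 \<or> (\<exists>v v'. tau_path R B2 x uk v \<and> bpa_step R v None v' \<and> (x', v') \<in> B2)"
    unfolding bb_half_def by blast
  then show ?case
  proof
    assume "\<exists>v v'. tau_path R B2 x uk v \<and> bpa_step R v None v' \<and> (x', v') \<in> B2"
    then obtain v v' where v: "tau_path R B2 x uk v" "bpa_step R v None v'" "(x', v') \<in> B2"
      by blast
    have "tau_path R (B1 O B2) s u v"
      using tau_path_relcomp_lift[OF v(1) sx] tau_path_trans uk(1) by blast
    moreover have "(s, v') \<in> B1 O B2" using tp_step(3) v(3) by blast
    ultimately have "tau_path R (B1 O B2) s u v'" using v(2) tau_path.tp_step by metis
    then show ?thesis using v(3) by blast
  qed (use uk in blast)
qed

lemma bb_half_relcomp:
  assumes half1: "bb_half R B1" and half2: "bb_half R B2"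
  shows "bb_half R (B1 O B2)"
  unfolding bb_half_def
proof (intro allI impI)
  fix s u a s' assume "(s, u) \<in> B1 O B2" and step: "bpa_step R s a s'"
  then obtain t where st: "(s, t) \<in> B1" and tu: "(t, u) \<in> B2" by blast
  from half1 st step have "(a = None \<and> (s', t) \<in> B1) \<or>
      (\<exists>tk t'. tau_path R B1 s t tk \<and> bpa_step R tk a t' \<and> (s', t') \<in> B1)"
    unfolding bb_half_def by blast
  then show "(a = None \<and> (s', u) \<in> B1 O B2) \<or>
      (\<exists>uk u'. tau_path R (B1 O B2) s u uk \<and> bpa_step R uk a u' \<and> (s', u') \<in> B1 O B2)"
  proof
    assume "\<exists>tk t'. tau_path R B1 s t tk \<and> bpa_step R tk a t' \<and> (s', t') \<in> B1"
    then obtain tk t' where tk: "tau_path R B1 s t tk" "bpa_step R tk a t'" "(s', t') \<in> B1"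
      by blast
    obtain uk where uk: "tau_path R (B1 O B2) s u uk" "(tk, uk) \<in> B2"
      using tau_path_relcomp[OF half2 tk(1) st tu] by blast
    have stk: "(s, tk) \<in> B1" using tau_path_in_rel tk(1) st by metis
    from half2 uk(2) tk(2) have "(a = None \<and> (t', uk) \<in> B2) \<or>
        (\<exists>v u'. tau_path R B2 tk uk v \<and> bpa_step R v a u' \<and> (t', u') \<in> B2)"
      unfolding bb_half_def by blast
    then show ?thesis
    proof
      assume \<tau>: "a = None \<and> (t', uk) \<in> B2"
      then have "(s', uk) \<in> B1 O B2" using tk(3) by blast
      from uk(1) show ?thesis
      proof cases
        case tp_refl
        then show ?thesis using \<tau> \<open>(s', uk) \<in> B1 O B2\<close> by blast
      next
        case (tp_step v)
        then show ?thesis using \<tau> \<open>(s', uk) \<in> B1 O B2\<close> by blast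
      qed
    next
      assume "\<exists>v u'. tau_path R B2 tk uk v \<and> bpa_step R v a u' \<and> (t', u') \<in> B2"
      then obtain v u' where v: "tau_path R B2 tk uk v" "bpa_step R v a u'" "(t', u') \<in> B2"
        by blast
      have "tau_path R (B1 O B2) s u v"
        using tau_path_relcomp_lift[OF v(1) stk] tau_path_trans uk(1) by blast
      then show ?thesis using v tk(3) by blast
    qed
  qed (use tu in blast)
qed

lemma bbisim_trans [trans]: "bbisim R s t \<Longrightarrow> bbisim R t u \<Longrightarrow> bbisim R s u"
proof -
  assume "bbisim R s t" "bbisim R t u"
  then obtain B1 B2 where B: "branching_bisim R B1" "(s, t) \<in> B1" "branching_bisim R B2" "(t, u) \<in> B2"
    by (auto simp: bbisim_def)
  then have "branching_bisim R (B1 O B2)"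
    by (auto simp: branching_bisim_def converse_relcomp intro: bb_half_relcomp)
  with B show ?thesis unfolding bbisim_def by blast
qed

lemma bb_half_append_left:
  "bb_half R {(\<delta> @ s, \<delta> @ t) | \<delta> s t. bbisim R s t}" (is "bb_half R ?L")
  unfolding bb_half_def
proof (intro allI impI)
  fix x y a x' assume "(x, y) \<in> ?L" and step: "bpa_step R x a x'"
  then obtain \<delta> s t where d: "x = \<delta> @ s" "y = \<delta> @ t" "bbisim R s t" by blast
  have bbisim_in_L: "(u, v) \<in> ?L" if "bbisim R u v" for u v
    using that by force
  then have sub: "bbisim_rel R \<subseteq> ?L" by blast
  show "(a = None \<and> (x', y) \<in> ?L) \<or> (\<exists>tk t'. tau_path R ?L x y tk \<and> bpa_step R tk a t' \<and> (x', t') \<in> ?L)"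
  proof (cases \<delta>)
    case Nil
    with bbisim_match d step have "(a = None \<and> bbisim R x' y) \<or>
        (\<exists>tk t'. tau_path R (bbisim_rel R) x y tk \<and> bpa_step R tk a t' \<and> bbisim R x' t')"
      by simp
    then show ?thesis using bbisim_in_L tau_path_mono[OF _ sub] by blast
  next
    case (Cons A \<delta>')
    with step d obtain \<alpha> where "(A, a, \<alpha>) \<in> R" "x' = (\<alpha> @ \<delta>') @ s"
      by (auto simp: bpa_step_Cons)
    moreover from this have "bpa_step R y a ((\<alpha> @ \<delta>') @ t)"
      using d Cons by (auto simp: bpa_step_Cons)
    ultimately show ?thesis using d by (blast intro: tau_path.tp_refl)
  qed
qed

lemma bbisim_append_left: "bbisim R s t \<Longrightarrow> bbisim R (\<delta> @ s) (\<delta> @ t)"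
proof -
  let ?L = "{(\<delta> @ s, \<delta> @ t) | \<delta> s t. bbisim R s t}"
  assume "bbisim R s t"
  moreover have "?L\<inverse> = ?L" by (auto intro: bbisim_sym)
  then have "branching_bisim R ?L" using bb_half_append_left by (simp add: branching_bisim_def)
  ultimately show ?thesis unfolding bbisim_def by blast
qed

lemma bbisim_Cons: "bbisim R s t \<Longrightarrow> bbisim R (X # s) (X # t)"
  using bbisim_append_left[of s t "[X]"] by simp

lemma bbisim_Nil_step: "bbisim R s [] \<Longrightarrow> bpa_step R s a s' \<Longrightarrow> a = None \<and> bbisim R s' []"
  using bbisim_match tau_path_Nil by fastforce

end

section \<open>The branching norm\<close>

definition step_cost :: "('v, 'a) bpa_rules \<Rightarrow> 'v list \<Rightarrow> 'a option \<Rightarrow> 'v list \<Rightarrow> nat" where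
  "step_cost R s a s' = (if a = None \<and> bbisim R s s' then 0 else 1)"

inductive cost_path :: "('v, 'a) bpa_rules \<Rightarrow> 'v list \<Rightarrow> nat \<Rightarrow> 'v list \<Rightarrow> bool" for R where
  cost_path_refl: "cost_path R s 0 s"
| cost_path_step: "bpa_step R s a s' \<Longrightarrow> cost_path R s' c t \<Longrightarrow> cost_path R s (step_cost R s a s' + c) t"

definition bnorm :: "('v, 'a) bpa_rules \<Rightarrow> 'v list \<Rightarrow> nat" where
  "bnorm R s = (LEAST c. cost_path R s c [])"

context
  fixes R :: "('v, 'a) bpa_rules"
begin

lemma cost_path_0_bbisim: "cost_path R s c t \<Longrightarrow> c = 0 \<Longrightarrow> bbisim R s t"
proof (induction rule: cost_path.induct)
  case (cost_path_refl s)
  show ?case by (rule bbisim_refl)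
next
  case (cost_path_step s a s' c t)
  then have "bbisim R s s'" by (auto simp: step_cost_def split: if_splits)
  also have "bbisim R s' t" using cost_path_step by simp
  finally show ?case .
qed

lemma reaches_append_within:
  "reaches R x y \<Longrightarrow> reaches_within R (\<lambda>t. \<exists>\<eta>. t = \<eta> @ v) (x @ v) (y @ v)"
proof (induction rule: rtranclp_induct)
  case (step y z)
  then obtain a where "bpa_step R (y @ v) a (z @ v)" by (blast intro: bpa_step_append)
  with step.IH show ?case by (blast intro: rtranclp.rtrancl_into_rtrancl)
qed simp

lemma reaches_append: "reaches R x y \<Longrightarrow> reaches R (x @ v) (y @ v)"
  by (rule rtranclp_mono[THEN predicate2D, OF _ reaches_append_within]) auto

lemma normed_reaches_Nil: "normed R \<Longrightarrow> reaches R s []"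
proof (induction s)
  case (Cons A s)
  then have "reaches R ([A] @ s) ([] @ s)"
    unfolding normed_def by (blast intro: reaches_append)
  with Cons show ?case by (simp add: rtranclp_trans)
qed simp

lemma reaches_Nil_cost_path: "reaches R s [] \<Longrightarrow> \<exists>c. cost_path R s c []"
  by (induction rule: converse_rtranclp_induct) (auto intro: cost_path.intros)

lemma bbisim_Nil_cost_path_0: "reaches R s [] \<Longrightarrow> bbisim R s [] \<Longrightarrow> cost_path R s 0 []"
proof (induction rule: converse_rtranclp_induct)
  case (step y z)
  then obtain a where a: "bpa_step R y a z" by blast
  with step bbisim_Nil_step have "a = None" "bbisim R z []" by blast+
  moreover from calculation step have "bbisim R y z" by (blast intro: bbisim_trans bbisim_sym)
  ultimately show ?case using step a cost_path_step[of R y a z 0 "[]"] by (simp add: step_cost_def)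
qed (rule cost_path_refl)

lemma tau_path_cost_path:
  "tau_path R (bbisim_rel R) t s u \<Longrightarrow> bbisim R t s \<Longrightarrow> cost_path R u c x \<Longrightarrow> cost_path R s c x"
proof (induction arbitrary: c rule: tau_path.induct)
  case (tp_step s u u')
  have "bbisim R t u" using tau_path_in_rel tp_step by fastforce
  then have "bbisim R u u'" using tp_step by (blast intro: bbisim_trans bbisim_sym)
  then have "cost_path R u (step_cost R u None u' + c) x" using tp_step by (blast intro: cost_path_step)
  then show ?case using tp_step \<open>bbisim R u u'\<close> by (simp add: step_cost_def)
qed

lemma cost_path_bbisim_le:
  assumes "normed R"
  shows "cost_path R t c [] \<Longrightarrow> bbisim R s t \<Longrightarrow> \<exists>c'\<le>c. cost_path R s c' []"
proof (induction t c "[] :: 'v list" arbitrary: s rule: cost_path.induct)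
  case cost_path_refl
  then show ?case using bbisim_Nil_cost_path_0 normed_reaches_Nil[OF assms] by blast
next
  case (cost_path_step t a t1 c1)
  have ts: "bbisim R t s" using cost_path_step bbisim_sym by blast
  from bbisim_match[OF ts cost_path_step(1)] show ?case
  proof
    assume "a = None \<and> bbisim R t1 s"
    then show ?thesis using cost_path_step bbisim_sym by (metis le_add2 le_trans)
  next
    assume "\<exists>sk s'. tau_path R (bbisim_rel R) t s sk \<and> bpa_step R sk a s' \<and> bbisim R t1 s'"
    then obtain sk s' where k: "tau_path R (bbisim_rel R) t s sk" "bpa_step R sk a s'" "bbisim R t1 s'"
      by blast
    obtain c' where c': "c' \<le> c1" "cost_path R s' c' []" using cost_path_step k bbisim_sym by blast
    have "bbisim R t sk" using tau_path_in_rel[OF k(1)] ts by auto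
    then have "step_cost R sk a s' = step_cost R t a t1"
      unfolding step_cost_def using k(3) by (metis bbisim_sym bbisim_trans)
    then have "cost_path R sk (step_cost R t a t1 + c') []"
      using k(2) c'(2) cost_path.cost_path_step[of R sk a s'] by metis
    then have "cost_path R s (step_cost R t a t1 + c') []" using tau_path_cost_path k(1) ts by blast
    then show ?thesis using c'(1) by (intro exI[where x = "step_cost R t a t1 + c'"]) auto
  qed
qed

lemma cost_path_bnorm: "normed R \<Longrightarrow> cost_path R s (bnorm R s) []"
  unfolding bnorm_def using reaches_Nil_cost_path normed_reaches_Nil by (metis LeastI)

lemma bnorm_le: "cost_path R s c [] \<Longrightarrow> bnorm R s \<le> c"
  unfolding bnorm_def by (rule Least_le)

lemma bnorm_bbisim: "normed R \<Longrightarrow> bbisim R s t \<Longrightarrow> bnorm R s = bnorm R t"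
  using cost_path_bbisim_le[OF _ cost_path_bnorm] bnorm_le bbisim_sym
  by (metis le_antisym le_trans)

lemma cost_path_split:
  "cost_path R x c [] \<Longrightarrow> x = \<delta> @ \<gamma> \<Longrightarrow>
    \<exists>c1 c2. c = c1 + c2 \<and> cost_path R (\<delta> @ \<gamma>) c1 \<gamma> \<and> cost_path R \<gamma> c2 []"
proof (induction x c "[] :: 'v list" arbitrary: \<delta> rule: cost_path.induct)
  case cost_path_refl
  then show ?case by (auto intro: cost_path.intros)
next
  case (cost_path_step x a x' c)
  show ?case
  proof (cases \<delta>)
    case Nil
    with cost_path_step show ?thesis
      by (intro exI[where x = 0] exI[where x = "step_cost R x a x' + c"]) (auto intro: cost_path.intros)
  next
    case (Cons A \<delta>')
    then obtain \<alpha> where "x' = (\<alpha> @ \<delta>') @ \<gamma>" using cost_path_step by (auto simp: bpa_step_Cons)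
    then obtain c1 c2 where "c = c1 + c2" "cost_path R x' c1 \<gamma>" "cost_path R \<gamma> c2 []"
      using cost_path_step by metis
    then show ?thesis using cost_path_step cost_path.cost_path_step[of R x a x' c1 \<gamma>]
      by (intro exI[where x = "step_cost R x a x' + c1"] exI[where x = c2]) auto
  qed
qed

lemma bnorm_append_ge: "normed R \<Longrightarrow> bnorm R \<gamma> \<le> bnorm R (\<delta> @ \<gamma>)"
  using cost_path_split[OF cost_path_bnorm refl] bnorm_le by (metis le_add2 le_trans)

lemma bnorm_append_eq_bbisim: "normed R \<Longrightarrow> bnorm R (\<delta> @ \<gamma>) = bnorm R \<gamma> \<Longrightarrow> bbisim R (\<delta> @ \<gamma>) \<gamma>"
proof -
  assume normed: "normed R" and eq: "bnorm R (\<delta> @ \<gamma>) = bnorm R \<gamma>"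
  obtain c1 c2 where c: "bnorm R (\<delta> @ \<gamma>) = c1 + c2" "cost_path R (\<delta> @ \<gamma>) c1 \<gamma>" "cost_path R \<gamma> c2 []"
    using cost_path_split[OF cost_path_bnorm[OF normed] refl] by blast
  then have "c1 = 0" using bnorm_le[OF c(3)] eq by simp
  then show ?thesis using cost_path_0_bbisim c by blast
qed

end

section \<open>Suffixes with the same \<open>R\<^sub>\<gamma>\<close>\<close>

text \<open>If \<open>R\<^sub>\<gamma>\<^sub>1 = R\<^sub>\<gamma>\<^sub>2\<close> this is a branching bisimulation: unless \<open>\<alpha> \<gamma>1 \<sim> \<gamma>1\<close> (then
  \<open>\<alpha> \<gamma>2 \<sim> \<gamma>2 \<sim> \<beta> \<gamma>2\<close> by \<open>Rset_absorb_transfer\<close>), the \<open>\<tau>\<close>-path of \<open>\<beta> \<gamma>1\<close> matching a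
  move of \<open>\<alpha> \<gamma>1\<close> never reaches \<open>\<gamma>1\<close>, so it can be replayed above \<open>\<gamma>2\<close>.\<close>
definition transfer_rel :: "('v, 'a) bpa_rules \<Rightarrow> 'v list \<Rightarrow> 'v list \<Rightarrow> ('v list \<times> 'v list) set" where
  "transfer_rel R \<gamma>1 \<gamma>2 =
    {(\<alpha> @ \<gamma>2, \<beta> @ \<gamma>2) | \<alpha> \<beta>. bbisim R (\<alpha> @ \<gamma>1) (\<beta> @ \<gamma>1)} \<union> bbisim_rel R"

lemma tau_path_transfer:
  assumes "tau_path R (bbisim_rel R) (\<alpha> @ \<gamma>1) (\<beta> @ \<gamma>1) tk" "\<beta> \<noteq> []"
    and "\<not> bbisim R (\<alpha> @ \<gamma>1) \<gamma>1"
  shows "\<exists>\<delta>. tk = \<delta> @ \<gamma>1 \<and> \<delta> \<noteq> [] \<and>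
    tau_path R (transfer_rel R \<gamma>1 \<gamma>2) (\<alpha> @ \<gamma>2) (\<beta> @ \<gamma>2) (\<delta> @ \<gamma>2)"
  using assms
proof (induction "\<beta> @ \<gamma>1" tk rule: tau_path.induct)
  case tp_refl
  then show ?case by (auto intro: tau_path.tp_refl)
next
  case (tp_step u u')
  then obtain \<delta> where \<delta>: "u = \<delta> @ \<gamma>1" "\<delta> \<noteq> []"
    "tau_path R (transfer_rel R \<gamma>1 \<gamma>2) (\<alpha> @ \<gamma>2) (\<beta> @ \<gamma>2) (\<delta> @ \<gamma>2)" by blast
  then obtain A \<delta>' where A: "\<delta> = A # \<delta>'" by (cases \<delta>) auto
  then obtain \<rho> where \<rho>: "(A, None, \<rho>) \<in> R" "u' = (\<rho> @ \<delta>') @ \<gamma>1"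
    using tp_step \<delta> by (auto simp: bpa_step_Cons)
  have "\<rho> @ \<delta>' \<noteq> []" using tp_step \<rho>(2) by auto
  moreover have "bpa_step R (\<delta> @ \<gamma>2) None ((\<rho> @ \<delta>') @ \<gamma>2)" using \<rho> A by (auto simp: bpa_step_Cons)
  moreover have "(\<alpha> @ \<gamma>2, (\<rho> @ \<delta>') @ \<gamma>2) \<in> transfer_rel R \<gamma>1 \<gamma>2"
    using tp_step \<rho> unfolding transfer_rel_def by blast
  ultimately show ?case using \<rho>(2) \<delta>(3) tau_path.tp_step by metis
qed

context
  fixes R :: "('v, 'a) bpa_rules"
  assumes normed: "normed R"
begin

lemma bbisim_absorb_tail: "bbisim R (X # \<eta> @ \<gamma>) \<gamma> \<Longrightarrow> bbisim R (\<eta> @ \<gamma>) \<gamma>"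
proof -
  assume "bbisim R (X # \<eta> @ \<gamma>) \<gamma>"
  then have "bnorm R ([X] @ \<eta> @ \<gamma>) = bnorm R \<gamma>" using bnorm_bbisim[OF normed] by simp
  moreover have "bnorm R (\<eta> @ \<gamma>) \<le> bnorm R ([X] @ \<eta> @ \<gamma>)" "bnorm R \<gamma> \<le> bnorm R (\<eta> @ \<gamma>)"
    using bnorm_append_ge[OF normed] by blast+
  ultimately show ?thesis using bnorm_append_eq_bbisim[OF normed] by (metis le_antisym)
qed

lemma Rset_absorb_transfer:
  assumes "Rset R \<gamma>1 = Rset R \<gamma>2"
  shows "bbisim R (\<beta> @ \<gamma>1) \<gamma>1 \<Longrightarrow> bbisim R (\<beta> @ \<gamma>2) \<gamma>2"
proof (induction \<beta>)
  case Nil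
  show ?case by (simp add: bbisim_refl)
next
  case (Cons X \<eta>)
  have \<eta>1: "bbisim R (\<eta> @ \<gamma>1) \<gamma>1" using bbisim_absorb_tail Cons.prems by simp
  then have \<eta>2: "bbisim R (\<eta> @ \<gamma>2) \<gamma>2" using Cons.IH by blast
  have "bbisim R (X # \<gamma>1) (X # \<eta> @ \<gamma>1)" using bbisim_Cons[OF \<eta>1] bbisim_sym by blast
  also have "bbisim R \<dots> \<gamma>1" using Cons.prems by simp
  finally have "X \<in> Rset R \<gamma>1" by (simp add: Rset_def)
  then have "X \<in> Rset R \<gamma>2" using assms by simp
  then have "bbisim R (X # \<gamma>2) \<gamma>2" by (simp add: Rset_def)
  with bbisim_Cons[OF \<eta>2, of X] show ?case by (simp add: bbisim_trans)
qed

lemma bb_half_transfer_rel: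
  assumes "Rset R \<gamma>1 = Rset R \<gamma>2"
  shows "bb_half R (transfer_rel R \<gamma>1 \<gamma>2)"
  unfolding bb_half_def
proof (intro allI impI)
  let ?T = "transfer_rel R \<gamma>1 \<gamma>2"
  fix x y a x' assume "(x, y) \<in> ?T" and step: "bpa_step R x a x'"
  have sub: "bbisim_rel R \<subseteq> ?T" by (auto simp: transfer_rel_def)
  show "(a = None \<and> (x', y) \<in> ?T) \<or> (\<exists>tk t'. tau_path R ?T x y tk \<and> bpa_step R tk a t' \<and> (x', t') \<in> ?T)"
  proof (cases "bbisim R x y")
    case True
    from bbisim_match[OF True step] show ?thesis
      using sub tau_path_mono[OF _ sub] by blast
  next
    case False
    with \<open>(x, y) \<in> ?T\<close> obtain \<alpha> \<beta> where \<alpha>\<beta>: "x = \<alpha> @ \<gamma>2" "y = \<beta> @ \<gamma>2" "bbisim R (\<alpha> @ \<gamma>1) (\<beta> @ \<gamma>1)"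
      unfolding transfer_rel_def by blast
    have not_absorbed: "\<not> bbisim R (\<alpha> @ \<gamma>1) \<gamma>1"
    proof
      assume \<alpha>1: "bbisim R (\<alpha> @ \<gamma>1) \<gamma>1"
      then have "bbisim R (\<beta> @ \<gamma>1) \<gamma>1" using \<alpha>\<beta>(3) bbisim_sym bbisim_trans by blast
      then have "bbisim R (\<beta> @ \<gamma>2) \<gamma>2" using Rset_absorb_transfer[OF assms] by blast
      moreover have "bbisim R (\<alpha> @ \<gamma>2) \<gamma>2" using Rset_absorb_transfer[OF assms] \<alpha>1 by blast
      ultimately show False using False \<alpha>\<beta> bbisim_sym bbisim_trans by metis
    qed
    then obtain A \<alpha>' where A: "\<alpha> = A # \<alpha>'" by (cases \<alpha>) (auto simp: bbisim_refl)
    have "\<beta> \<noteq> []" using not_absorbed \<alpha>\<beta>(3) by auto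
    obtain \<rho> where \<rho>: "(A, a, \<rho>) \<in> R" "x' = (\<rho> @ \<alpha>') @ \<gamma>2"
      using step \<alpha>\<beta> A by (auto simp: bpa_step_Cons)
    have "bpa_step R (\<alpha> @ \<gamma>1) a ((\<rho> @ \<alpha>') @ \<gamma>1)" using \<rho> A by (auto simp: bpa_step_Cons)
    from bbisim_match[OF \<alpha>\<beta>(3) this] show ?thesis
    proof
      assume "a = None \<and> bbisim R ((\<rho> @ \<alpha>') @ \<gamma>1) (\<beta> @ \<gamma>1)"
      then show ?thesis using \<rho> \<alpha>\<beta> unfolding transfer_rel_def by blast
    next
      assume "\<exists>tk t'. tau_path R (bbisim_rel R) (\<alpha> @ \<gamma>1) (\<beta> @ \<gamma>1) tk \<and> bpa_step R tk a t' \<and>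
        bbisim R ((\<rho> @ \<alpha>') @ \<gamma>1) t'"
      then obtain tk t' where k: "tau_path R (bbisim_rel R) (\<alpha> @ \<gamma>1) (\<beta> @ \<gamma>1) tk"
        "bpa_step R tk a t'" "bbisim R ((\<rho> @ \<alpha>') @ \<gamma>1) t'" by blast
      obtain \<delta> where \<delta>: "tk = \<delta> @ \<gamma>1" "\<delta> \<noteq> []" "tau_path R ?T (\<alpha> @ \<gamma>2) (\<beta> @ \<gamma>2) (\<delta> @ \<gamma>2)"
        using tau_path_transfer[OF k(1) \<open>\<beta> \<noteq> []\<close> not_absorbed] by blast
      then obtain B \<delta>' where B: "\<delta> = B # \<delta>'" by (cases \<delta>) auto
      then obtain \<sigma> where \<sigma>: "(B, a, \<sigma>) \<in> R" "t' = (\<sigma> @ \<delta>') @ \<gamma>1"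
        using k(2) \<delta> by (auto simp: bpa_step_Cons)
      have "bpa_step R (\<delta> @ \<gamma>2) a ((\<sigma> @ \<delta>') @ \<gamma>2)" using \<sigma> B by (auto simp: bpa_step_Cons)
      moreover have "(x', (\<sigma> @ \<delta>') @ \<gamma>2) \<in> ?T" using \<rho> \<sigma> k(3) unfolding transfer_rel_def by blast
      ultimately show ?thesis using \<delta> \<alpha>\<beta> by blast
    qed
  qed
qed

lemma bbisim_transfer:
  assumes "Rset R \<gamma>1 = Rset R \<gamma>2"
  shows "bbisim R (\<alpha> @ \<gamma>1) (\<beta> @ \<gamma>1) \<longleftrightarrow> bbisim R (\<alpha> @ \<gamma>2) (\<beta> @ \<gamma>2)"
proof -
  have "bbisim R (\<alpha> @ \<gamma>2) (\<beta> @ \<gamma>2)"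
    if "Rset R \<gamma>1 = Rset R \<gamma>2" "bbisim R (\<alpha> @ \<gamma>1) (\<beta> @ \<gamma>1)" for \<gamma>1 \<gamma>2
  proof -
    have "(transfer_rel R \<gamma>1 \<gamma>2)\<inverse> = transfer_rel R \<gamma>1 \<gamma>2"
      unfolding transfer_rel_def by (auto intro: bbisim_sym)
    then have "branching_bisim R (transfer_rel R \<gamma>1 \<gamma>2)"
      using bb_half_transfer_rel[OF that(1)] by (simp add: branching_bisim_def)
    moreover have "(\<alpha> @ \<gamma>2, \<beta> @ \<gamma>2) \<in> transfer_rel R \<gamma>1 \<gamma>2"
      using that(2) unfolding transfer_rel_def by blast
    ultimately show ?thesis unfolding bbisim_def by blast
  qed
  with assms show ?thesis by metis
qed

lemma Rset_bbisim:
  assumes "bbisim R \<gamma>1 \<gamma>2"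
  shows "Rset R \<gamma>1 = Rset R \<gamma>2"
proof -
  have "bbisim R (X # \<gamma>1) \<gamma>1 \<longleftrightarrow> bbisim R (X # \<gamma>2) \<gamma>2" for X
    using bbisim_Cons[OF assms, of X] assms bbisim_sym bbisim_trans by meson
  then show ?thesis by (simp add: Rset_def)
qed

lemma Rset_Cons: "Rset R \<gamma>1 = Rset R \<gamma>2 \<Longrightarrow> Rset R (A # \<gamma>1) = Rset R (A # \<gamma>2)"
proof -
  assume "Rset R \<gamma>1 = Rset R \<gamma>2"
  from bbisim_transfer[OF this] have "bbisim R ([X, A] @ \<gamma>1) ([A] @ \<gamma>1) \<longleftrightarrow> bbisim R ([X, A] @ \<gamma>2) ([A] @ \<gamma>2)"
    for X by blast
  then show ?thesis by (simp add: Rset_def)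
qed

end

section \<open>Canonical outputs\<close>

lemma redfree_Nil [simp]: "redfree R \<gamma> []"
  by (simp add: redfree_def)

lemma redfree_Cons: "redfree R \<gamma> (X # \<alpha>) \<longleftrightarrow> \<not> bbisim R (X # \<alpha> @ \<gamma>) (\<alpha> @ \<gamma>) \<and> redfree R \<gamma> \<alpha>"
  unfolding redfree_def by (auto simp: Cons_eq_append_conv)

lemma redfree_append: "redfree R \<gamma> (\<alpha> @ \<beta>) \<longleftrightarrow> redfree R (\<beta> @ \<gamma>) \<alpha> \<and> redfree R \<gamma> \<beta>"
  by (induction \<alpha>) (auto simp: redfree_Cons)

lemma lexless_iff_less_rev:
  fixes \<alpha> \<beta> :: "'v::linorder list"
  assumes "length \<alpha> = length \<beta>"
  shows "lexless \<alpha> \<beta> \<longleftrightarrow> rev \<alpha> < rev \<beta>"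
proof -
  have no_proper_prefix: "\<not> (\<exists>x vs. rev \<beta> = rev \<alpha> @ x # vs)"
    using assms by (auto dest: arg_cong[where f = length])
  have "rev \<alpha> < rev \<beta> \<longleftrightarrow> ord_class.lexordp (rev \<alpha>) (rev \<beta>)"
    by (simp add: list_less_def lexordp_conv_lexord)
  also have "\<dots> \<longleftrightarrow> (\<exists>us a b vs ws. a < b \<and> rev \<alpha> = us @ a # vs \<and> rev \<beta> = us @ b # ws)"
    using no_proper_prefix by (simp add: lexordp_iff)
  also have "\<dots> \<longleftrightarrow> (\<exists>\<alpha>' \<beta>' A B \<gamma>. \<alpha> = \<alpha>' @ A # \<gamma> \<and> \<beta> = \<beta>' @ B # \<gamma> \<and> A < B)"
  proof
    assume "\<exists>us a b vs ws. a < b \<and> rev \<alpha> = us @ a # vs \<and> rev \<beta> = us @ b # ws"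
    then obtain us a b vs ws where "a < b" "\<alpha> = rev vs @ a # rev us" "\<beta> = rev ws @ b # rev us"
      by (auto simp: rev_swap)
    then show "\<exists>\<alpha>' \<beta>' A B \<gamma>. \<alpha> = \<alpha>' @ A # \<gamma> \<and> \<beta> = \<beta>' @ B # \<gamma> \<and> A < B" by blast
  next
    assume "\<exists>\<alpha>' \<beta>' A B \<gamma>. \<alpha> = \<alpha>' @ A # \<gamma> \<and> \<beta> = \<beta>' @ B # \<gamma> \<and> A < B"
    then obtain \<alpha>' \<beta>' A B \<gamma> where "rev \<alpha> = rev \<gamma> @ A # rev \<alpha>'" "rev \<beta> = rev \<gamma> @ B # rev \<beta>'" "A < B"
      by auto
    then show "\<exists>us a b vs ws. a < b \<and> rev \<alpha> = us @ a # vs \<and> rev \<beta> = us @ b # ws" by blast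
  qed
  also have "\<dots> \<longleftrightarrow> lexless \<alpha> \<beta>"
    using assms by (auto simp: lexless_def)
  finally show ?thesis ..
qed

lemma lexless_asym: "length \<alpha> = length \<beta> \<Longrightarrow> lexless \<alpha> \<beta> \<Longrightarrow> \<not> lexless \<beta> (\<alpha> :: 'v::linorder list)"
  using lexless_iff_less_rev by (metis less_asym)

lemma lexless_least_ex1:
  fixes S :: "'v::linorder list set"
  assumes "finite S" "S \<noteq> {}" and same_length: "\<And>\<alpha> \<beta>. \<alpha> \<in> S \<Longrightarrow> \<beta> \<in> S \<Longrightarrow> length \<alpha> = length \<beta>"
  shows "\<exists>!\<alpha>. \<alpha> \<in> S \<and> (\<forall>\<beta>\<in>S. \<beta> \<noteq> \<alpha> \<longrightarrow> lexless \<alpha> \<beta>)"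
proof -
  have lexless_iff: "lexless \<alpha> \<beta> \<longleftrightarrow> rev \<alpha> < rev \<beta>" if "\<alpha> \<in> S" "\<beta> \<in> S" for \<alpha> \<beta>
    using lexless_iff_less_rev[OF same_length[OF that]] .
  let ?m = "rev (Min (rev ` S))"
  have "Min (rev ` S) \<in> rev ` S" using assms by (intro Min_in) auto
  then have m: "?m \<in> S" by auto
  have least: "lexless ?m \<beta>" if "\<beta> \<in> S" "\<beta> \<noteq> ?m" for \<beta>
  proof -
    have "Min (rev ` S) \<le> rev \<beta>" using that(1) assms(1) by simp
    moreover have "Min (rev ` S) \<noteq> rev \<beta>" using that(2) by auto
    ultimately have "rev ?m < rev \<beta>" by simp
    then show ?thesis using lexless_iff[OF m that(1)] by blast
  qed
  show ?thesis
  proof (rule ex1I[of _ ?m])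
    show "?m \<in> S \<and> (\<forall>\<beta>\<in>S. \<beta> \<noteq> ?m \<longrightarrow> lexless ?m \<beta>)" using m least by blast
  next
    fix \<alpha> assume \<alpha>: "\<alpha> \<in> S \<and> (\<forall>\<beta>\<in>S. \<beta> \<noteq> \<alpha> \<longrightarrow> lexless \<alpha> \<beta>)"
    show "\<alpha> = ?m"
    proof (rule ccontr)
      assume "\<alpha> \<noteq> ?m"
      then have "lexless ?m \<alpha>" "lexless \<alpha> ?m" using least \<alpha> m by auto
      then have "rev ?m < rev \<alpha>" "rev \<alpha> < rev ?m"
        using lexless_iff[OF m] lexless_iff[OF _ m] \<alpha> by auto
      then show False by (rule less_asym)
    qed
  qed
qed

context
  fixes R :: "('v::{finite, linorder}, 'a) bpa_rules"
  assumes normed: "normed R"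
begin

lemma redfree_transfer: "Rset R \<gamma>1 = Rset R \<gamma>2 \<Longrightarrow> redfree R \<gamma>1 \<alpha> \<longleftrightarrow> redfree R \<gamma>2 \<alpha>"
proof (induction \<alpha>)
  case (Cons X \<alpha>)
  then show ?case
    using bbisim_transfer[OF normed Cons.prems, of "X # \<alpha>" \<alpha>] by (simp add: redfree_Cons)
qed simp

lemma out_cands_transfer:
  assumes "Rset R \<gamma>1 = Rset R \<gamma>2"
  shows "out_cands R \<gamma>1 A = out_cands R \<gamma>2 A"
proof -
  have "bbisim R (\<alpha> @ \<gamma>1) ([A] @ \<gamma>1) \<longleftrightarrow> bbisim R (\<alpha> @ \<gamma>2) ([A] @ \<gamma>2)" for \<alpha>
    by (rule bbisim_transfer[OF normed assms])
  then show ?thesis unfolding out_cands_def using redfree_transfer[OF assms] by simp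
qed

lemma canon_out_transfer: "Rset R \<gamma>1 = Rset R \<gamma>2 \<Longrightarrow> canon_out R \<gamma>1 A = canon_out R \<gamma>2 A"
  unfolding canon_out_def longest_cands_def by (drule out_cands_transfer[where A = A]) simp

lemma redfree_length_bnorm: "redfree R \<gamma> \<alpha> \<Longrightarrow> length \<alpha> + bnorm R \<gamma> \<le> bnorm R (\<alpha> @ \<gamma>)"
proof (induction \<alpha>)
  case (Cons X \<alpha>)
  then have "\<not> bbisim R ([X] @ \<alpha> @ \<gamma>) (\<alpha> @ \<gamma>)" "redfree R \<gamma> \<alpha>" by (auto simp: redfree_Cons)
  then have "bnorm R ([X] @ \<alpha> @ \<gamma>) \<noteq> bnorm R (\<alpha> @ \<gamma>)"
    "length \<alpha> + bnorm R \<gamma> \<le> bnorm R (\<alpha> @ \<gamma>)"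
    using bnorm_append_eq_bbisim[OF normed] Cons.IH by blast+
  moreover have "bnorm R (\<alpha> @ \<gamma>) \<le> bnorm R ([X] @ \<alpha> @ \<gamma>)" by (rule bnorm_append_ge[OF normed])
  ultimately show ?case by simp
qed simp

lemma out_cands_length_le: "\<alpha> \<in> out_cands R \<gamma> A \<Longrightarrow> length \<alpha> \<le> bnorm R (A # \<gamma>)"
proof -
  assume "\<alpha> \<in> out_cands R \<gamma> A"
  then have "bnorm R (\<alpha> @ \<gamma>) = bnorm R (A # \<gamma>)" "redfree R \<gamma> \<alpha>"
    using bnorm_bbisim[OF normed] by (auto simp: out_cands_def)
  then show ?thesis using redfree_length_bnorm by fastforce
qed

lemma finite_out_cands: "finite (out_cands R \<gamma> A)"
proof (rule finite_subset)
  show "out_cands R \<gamma> A \<subseteq> {\<alpha>. set \<alpha> \<subseteq> UNIV \<and> length \<alpha> \<le> bnorm R (A # \<gamma>)}"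
    using out_cands_length_le by blast
qed (use finite_lists_length_le[OF finite_UNIV, of "bnorm R (A # \<gamma>)"] in simp)

lemma out_cands_nonempty: "out_cands R \<gamma> A \<noteq> {}"
proof (cases "bbisim R (A # \<gamma>) \<gamma>")
  case True
  then have "[] \<in> out_cands R \<gamma> A" using bbisim_sym by (simp add: out_cands_def)
  then show ?thesis by blast
next
  case False
  then have "[A] \<in> out_cands R \<gamma> A" by (simp add: out_cands_def redfree_Cons bbisim_refl)
  then show ?thesis by blast
qed

lemma longest_cands_nonempty: "longest_cands R \<gamma> A \<noteq> {}"
proof -
  let ?C = "out_cands R \<gamma> A"
  have "Max (length ` ?C) \<in> length ` ?C"
    using finite_out_cands out_cands_nonempty by (intro Max_in) auto
  then obtain \<alpha> where "\<alpha> \<in> ?C" "length \<alpha> = Max (length ` ?C)" by auto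
  then have "\<alpha> \<in> longest_cands R \<gamma> A"
    using finite_out_cands by (simp add: longest_cands_def)
  then show ?thesis by blast
qed

lemma canon_out_least_longest:
  "canon_out R \<gamma> A \<in> longest_cands R \<gamma> A \<and>
   (\<forall>\<beta>\<in>longest_cands R \<gamma> A. \<beta> \<noteq> canon_out R \<gamma> A \<longrightarrow> lexless (canon_out R \<gamma> A) \<beta>)"
proof -
  have "finite (longest_cands R \<gamma> A)"
    using finite_out_cands by (simp add: longest_cands_def)
  moreover have "\<And>\<alpha> \<beta>. \<alpha> \<in> longest_cands R \<gamma> A \<Longrightarrow> \<beta> \<in> longest_cands R \<gamma> A \<Longrightarrow> length \<alpha> = length \<beta>"
    unfolding longest_cands_def by (simp add: le_antisym)
  ultimately show ?thesis
    unfolding canon_out_def by (rule theI'[OF lexless_least_ex1[OF _ longest_cands_nonempty]])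
qed

lemma canon_out_in_out_cands: "canon_out R \<gamma> A \<in> out_cands R \<gamma> A"
  using canon_out_least_longest by (simp add: longest_cands_def)

lemma out_cands_length_le_canon_out: "\<beta> \<in> out_cands R \<gamma> A \<Longrightarrow> length \<beta> \<le> length (canon_out R \<gamma> A)"
  using canon_out_least_longest by (simp add: longest_cands_def)

lemma canon_out_lexless:
  "\<beta> \<in> out_cands R \<gamma> A \<Longrightarrow> length \<beta> = length (canon_out R \<gamma> A) \<Longrightarrow> \<beta> \<noteq> canon_out R \<gamma> A \<Longrightarrow>
    lexless (canon_out R \<gamma> A) \<beta>"
  using canon_out_least_longest[of \<gamma> A] out_cands_length_le_canon_out by (simp add: longest_cands_def)

end

section \<open>Uniqueness of prime normal forms\<close>

context
  fixes R :: "('v, 'a) bpa_rules"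
begin

lemma tau_path_reaches_within:
  "tau_path R (bbisim_rel R) s t u \<Longrightarrow> Q s \<Longrightarrow> reaches_within R (\<lambda>y. \<exists>z. Q z \<and> bbisim R z y) t u"
proof (induction rule: tau_path.induct)
  case (tp_step t u u')
  then show ?case by (blast intro: rtranclp.rtrancl_into_rtrancl)
qed simp

lemma reaches_within_bbisim_match:
  "reaches_within R Q s s' \<Longrightarrow> Q s \<Longrightarrow> bbisim R s t \<Longrightarrow>
    \<exists>t'. reaches_within R (\<lambda>y. \<exists>z. Q z \<and> bbisim R z y) t t' \<and> bbisim R s' t'"
proof (induction arbitrary: t rule: converse_rtranclp_induct)
  case base
  then show ?case by blast
next
  case (step s s1)
  let ?Q' = "\<lambda>y. \<exists>z. Q z \<and> bbisim R z y"
  from step obtain a where a: "bpa_step R s a s1" "Q s1" by blast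
  from bbisim_match[OF step.prems(2) a(1)] show ?case
  proof
    assume "a = None \<and> bbisim R s1 t"
    then show ?thesis using step.IH a(2) by blast
  next
    assume "\<exists>tk t'. tau_path R (bbisim_rel R) s t tk \<and> bpa_step R tk a t' \<and> bbisim R s1 t'"
    then obtain tk t1 where k: "tau_path R (bbisim_rel R) s t tk" "bpa_step R tk a t1" "bbisim R s1 t1"
      by blast
    obtain t' where t': "reaches_within R ?Q' t1 t'" "bbisim R s' t'"
      using step.IH a(2) k(3) by blast
    have "reaches_within R ?Q' t tk" using tau_path_reaches_within[OF k(1)] step.prems(1) by blast
    moreover have "(\<lambda>s t. (\<exists>a. bpa_step R s a t) \<and> ?Q' t) tk t1" using k a(2) by blast
    ultimately have "reaches_within R ?Q' t t1" by (rule rtranclp.rtrancl_into_rtrancl)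
    then show ?thesis using t' by (blast intro: rtranclp_trans)
  qed
qed

lemma reaches_within_suffix:
  assumes "reaches_within R P (\<delta> @ \<gamma>) t" "P (\<delta> @ \<gamma>)"
  shows "(\<exists>\<delta>'. t = \<delta>' @ \<gamma>) \<or> P \<gamma>"
proof -
  from assms have "((\<exists>\<delta>'. t = \<delta>' @ \<gamma>) \<or> P \<gamma>) \<and> P t"
  proof (induction rule: rtranclp_induct)
    case (step y z)
    then obtain a where a: "bpa_step R y a z" "P z" by blast
    from step.IH step.prems have "(\<exists>\<delta>'. y = \<delta>' @ \<gamma>) \<or> P \<gamma>" "P y" by blast+
    then have "(\<exists>\<delta>'. z = \<delta>' @ \<gamma>) \<or> P \<gamma>"
    proof (elim disjE exE)
      fix \<delta>' assume "y = \<delta>' @ \<gamma>"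
      with a(1) \<open>P y\<close> show ?thesis by (cases \<delta>') (auto simp: bpa_step_Cons)
    qed blast
    then show ?case using a(2) by blast
  qed blast
  then show ?thesis by blast
qed

end

definition prime_at :: "('v::linorder, 'a) bpa_rules \<Rightarrow> 'v list \<Rightarrow> 'v \<Rightarrow> bool" where
  "prime_at R u X \<longleftrightarrow> \<not> bbisim R (X # u) u \<and>
     (\<forall>\<alpha>. redfree R u \<alpha> \<and> bbisim R (\<alpha> @ u) (X # u) \<longrightarrow> length \<alpha> \<le> 1) \<and>
     (\<forall>Y. bbisim R (Y # u) (X # u) \<longrightarrow> \<not> Y < X)"

primrec normal_form :: "('v::linorder, 'a) bpa_rules \<Rightarrow> 'v list \<Rightarrow> bool" where
  "normal_form R [] = True"
| "normal_form R (X # u) \<longleftrightarrow> normal_form R u \<and> prime_at R u X"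

lemma normal_form_append:
  "(\<And>c' X \<zeta>. c = c' @ X # \<zeta> \<Longrightarrow> prime_at R (\<zeta> @ u) X) \<Longrightarrow> normal_form R u \<Longrightarrow> normal_form R (c @ u)"
proof (induction c)
  case (Cons X c)
  have "prime_at R (c @ u) X" using Cons.prems(1)[of "[]" X c] by simp
  moreover have "normal_form R (c @ u)" using Cons by (metis append_Cons)
  ultimately show ?case by simp
qed simp

context
  fixes R :: "('v, 'a) bpa_rules"
  assumes normed: "normed R"
begin

lemma bbisim_append_bnorm_eq: "bbisim R (\<eta> @ v) u \<Longrightarrow> bnorm R u \<le> bnorm R v \<Longrightarrow> bbisim R v u"
proof -
  assume \<eta>: "bbisim R (\<eta> @ v) u" and "bnorm R u \<le> bnorm R v"
  then have "bnorm R (\<eta> @ v) = bnorm R v"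
    using bnorm_bbisim[OF normed \<eta>] bnorm_append_ge[OF normed, of v \<eta>] by simp
  then have "bbisim R (\<eta> @ v) v" by (rule bnorm_append_eq_bbisim[OF normed])
  then show ?thesis using \<eta> bbisim_sym bbisim_trans by blast
qed

text \<open>Play the run of \<open>\<beta> v\<close> down to \<open>v\<close> (it keeps the suffix \<open>v\<close>) against \<open>\<delta> u\<close>. The
  matching run of \<open>\<delta> u\<close> either keeps the suffix \<open>u\<close>, or it visits \<open>u\<close>, which is then
  bisimilar to some \<open>\<eta> v\<close> and hence, by the norms, to \<open>v\<close>.\<close>
lemma bbisim_append_tail_ex:
  assumes "bbisim R (\<delta> @ u) (\<beta> @ v)" and "bnorm R u \<le> bnorm R v"
  shows "\<exists>\<delta>'. bbisim R v (\<delta>' @ u)"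
proof -
  let ?Q = "\<lambda>y. \<exists>\<eta>. y = \<eta> @ v"
  let ?P = "\<lambda>y. \<exists>z. ?Q z \<and> bbisim R z y"
  have run: "reaches_within R ?Q (\<beta> @ v) ([] @ v)"
    by (rule reaches_append_within[OF normed_reaches_Nil[OF normed]])
  have "?Q (\<beta> @ v)" by blast
  from reaches_within_bbisim_match[OF run this bbisim_sym[OF assms(1)]]
  obtain t' where t': "reaches_within R ?P (\<delta> @ u) t'" "bbisim R v t'" by auto
  have "?P (\<delta> @ u)" using bbisim_sym[OF assms(1)] by blast
  with t'(1) have "(\<exists>\<delta>'. t' = \<delta>' @ u) \<or> ?P u" by (rule reaches_within_suffix[where \<delta> = \<delta> and \<gamma> = u])
  then show ?thesis
  proof
    assume "?P u"
    then obtain \<eta> where "bbisim R (\<eta> @ v) u" by blast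
    then have "bbisim R v u" using assms(2) by (rule bbisim_append_bnorm_eq)
    then show ?thesis by (metis append_Nil)
  qed (use t'(2) in blast)
qed

lemma redfree_reduct_ex: "\<exists>\<delta>'. redfree R \<gamma> \<delta>' \<and> bbisim R (\<delta>' @ \<gamma>) (\<delta> @ \<gamma>)"
proof (induction \<delta>)
  case Nil
  show ?case using bbisim_refl redfree_Nil by blast
next
  case (Cons Z \<delta>)
  then obtain \<delta>' where \<delta>': "redfree R \<gamma> \<delta>'" "bbisim R (\<delta>' @ \<gamma>) (\<delta> @ \<gamma>)" by blast
  have Z: "bbisim R (Z # \<delta>' @ \<gamma>) (Z # \<delta> @ \<gamma>)" using bbisim_Cons[OF \<delta>'(2)] .
  show ?case
  proof (cases "bbisim R (Z # \<delta>' @ \<gamma>) (\<delta>' @ \<gamma>)")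
    case True
    then have "bbisim R (\<delta>' @ \<gamma>) ((Z # \<delta>) @ \<gamma>)" using Z bbisim_sym bbisim_trans by (metis append_Cons)
    then show ?thesis using \<delta>'(1) by blast
  next
    case False
    then have "redfree R \<gamma> (Z # \<delta>')" using \<delta>'(1) by (simp add: redfree_Cons)
    then show ?thesis using Z by auto
  qed
qed

end

context
  fixes R :: "('v::linorder, 'a) bpa_rules"
  assumes normed: "normed R"
begin

lemma prime_at_not_bbisim_Nil: "prime_at R u X \<Longrightarrow> \<not> bbisim R (X # u) []"
proof
  assume "prime_at R u X" "bbisim R (X # u) []"
  then have "bnorm R ([X] @ u) = bnorm R []" using bnorm_bbisim[OF normed] by simp
  moreover have "bnorm R [] \<le> bnorm R u" "bnorm R u \<le> bnorm R ([X] @ u)"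
    using bnorm_append_ge[OF normed, of "[]" u] bnorm_append_ge[OF normed, of u "[X]"] by simp_all
  ultimately have "bnorm R ([X] @ u) = bnorm R u" by simp
  then have "bbisim R ([X] @ u) u" by (rule bnorm_append_eq_bbisim[OF normed])
  then have "bbisim R (X # u) u" by simp
  with \<open>prime_at R u X\<close> show False by (simp add: prime_at_def)
qed

text \<open>Of two prime decompositions \<open>X u \<sim> Y v\<close>, the tail of larger norm extends the
  other, \<open>v \<sim> \<delta> u\<close> with \<open>\<delta>\<close> redundancy-free; then \<open>Y \<delta>\<close> would be a longer
  redundancy-free replacement for \<open>X\<close>, unless \<open>\<delta>\<close> is empty.\<close>
lemma prime_at_tails_bbisim:
  assumes pX: "prime_at R u X" and pY: "prime_at R v Y"
    and XY: "bbisim R (X # u) (Y # v)" and le: "bnorm R u \<le> bnorm R v"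
  shows "bbisim R v u"
proof -
  obtain \<delta> where "bbisim R v (\<delta> @ u)"
    using bbisim_append_tail_ex[OF normed, of "[X]" u "[Y]" v] XY le by auto
  moreover obtain \<delta>' where \<delta>': "redfree R u \<delta>'" "bbisim R (\<delta>' @ u) (\<delta> @ u)"
    using redfree_reduct_ex[OF normed] by blast
  ultimately have v: "bbisim R v (\<delta>' @ u)" using bbisim_sym bbisim_trans by blast
  show ?thesis
  proof (cases \<delta>')
    case Nil
    then show ?thesis using v by simp
  next
    case (Cons Z \<delta>'')
    have Yv: "bbisim R (Y # v) (Y # \<delta>' @ u)" using bbisim_Cons[OF v] .
    have "\<not> bbisim R (Y # \<delta>' @ u) (\<delta>' @ u)"
    proof
      assume "bbisim R (Y # \<delta>' @ u) (\<delta>' @ u)"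
      with Yv v have "bbisim R (Y # v) v" using bbisim_sym bbisim_trans by meson
      with pY show False by (simp add: prime_at_def)
    qed
    then have "redfree R u (Y # \<delta>')" using \<delta>'(1) by (simp add: redfree_Cons)
    moreover have "bbisim R ((Y # \<delta>') @ u) (X # u)"
      using bbisim_trans[OF XY Yv] bbisim_sym by simp
    ultimately have "length (Y # \<delta>') \<le> 1" using pX unfolding prime_at_def by blast
    then show ?thesis using Cons by simp
  qed
qed

lemma normal_form_unique: "normal_form R u \<Longrightarrow> normal_form R v \<Longrightarrow> bbisim R u v \<Longrightarrow> u = v"
proof (induction u arbitrary: v)
  case Nil
  show ?case
  proof (cases v)
    case (Cons Y v')
    with Nil.prems have "prime_at R v' Y" "bbisim R (Y # v') []"
      using bbisim_sym[OF Nil.prems(3)] by auto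
    then show ?thesis using prime_at_not_bbisim_Nil by blast
  qed simp
next
  case (Cons X u)
  show ?case
  proof (cases v)
    case Nil
    then show ?thesis using Cons.prems prime_at_not_bbisim_Nil by auto
  next
    case (Cons Y v')
    have pX: "prime_at R u X" "normal_form R u" using Cons.prems by auto
    have pY: "prime_at R v' Y" "normal_form R v'" using Cons.prems Cons by auto
    have XY: "bbisim R (X # u) (Y # v')" using Cons.prems Cons by simp
    have "bbisim R u v'"
      using prime_at_tails_bbisim[OF pX(1) pY(1) XY] prime_at_tails_bbisim[OF pY(1) pX(1) bbisim_sym[OF XY]]
        bbisim_sym by fastforce
    then have "u = v'" using Cons.IH pX pY by blast
    with XY pX pY have "\<not> Y < X" "\<not> X < Y" unfolding prime_at_def using bbisim_sym by blast+
    then show ?thesis using Cons \<open>u = v'\<close> by simp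
  qed
qed

end

section \<open>The canonical transducer\<close>

text \<open>The output of the canonical transducer on \<open>w\<close>, computed along the suffixes of \<open>w\<close>
  instead of along the representatives chosen by \<^const>\<open>canon_delta\<close>.\<close>
primrec canon_out_word :: "('v::linorder, 'a) bpa_rules \<Rightarrow> 'v list \<Rightarrow> 'v list" where
  "canon_out_word R [] = []"
| "canon_out_word R (A # w) = canon_out R w A @ canon_out_word R w"

context
  fixes R :: "('v::{finite, linorder}, 'a) bpa_rules"
  assumes normed: "normed R"
begin

lemma canon_delta_Rset: "canon_delta R (Rset R \<gamma>) A = (Rset R (A # \<gamma>), canon_out R \<gamma> A)"
proof -
  let ?\<gamma>' = "SOME \<gamma>'. Rset R \<gamma>' = Rset R \<gamma>"
  have rep: "Rset R ?\<gamma>' = Rset R \<gamma>" by (rule someI) (rule refl)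
  show ?thesis
    unfolding canon_delta_def Let_def
    using Rset_Cons[OF normed rep] canon_out_transfer[OF normed rep] by simp
qed

lemma canon_T_eq_canon_out_word: "canon_T R w = canon_out_word R w"
proof -
  have "trans_run R (Rset R []) w = (Rset R w, canon_out_word R w)"
    by (induction w) (simp_all add: canon_delta_Rset)
  then show ?thesis by (simp add: canon_T_def)
qed

lemma canon_out_word_bbisim: "bbisim R (canon_out_word R w) w"
proof (induction w)
  case Nil
  show ?case by (simp add: bbisim_refl)
next
  case (Cons A w)
  have "bbisim R (canon_out R w A @ canon_out_word R w) (canon_out R w A @ w)"
    using bbisim_append_left[OF Cons.IH] .
  also have "bbisim R \<dots> (A # w)"
    using canon_out_in_out_cands[OF normed] by (simp add: out_cands_def)
  finally show ?case by simp
qed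

lemma out_cands_replace:
  assumes cand: "c @ X # \<zeta> \<in> out_cands R u A"
    and \<alpha>: "redfree R (\<zeta> @ u) \<alpha>" "bbisim R (\<alpha> @ \<zeta> @ u) (X # \<zeta> @ u)"
  shows "c @ \<alpha> @ \<zeta> \<in> out_cands R u A"
proof -
  from cand have c: "bbisim R (c @ X # \<zeta> @ u) (A # u)" "redfree R u (c @ X # \<zeta>)"
    by (simp_all add: out_cands_def)
  have "bbisim R (c @ \<alpha> @ \<zeta> @ u) (c @ X # \<zeta> @ u)" by (rule bbisim_append_left[OF \<alpha>(2)])
  also have "bbisim R \<dots> (A # u)" by (rule c(1))
  finally have bb: "bbisim R ((c @ \<alpha> @ \<zeta>) @ u) (A # u)" by simp
  have "redfree R (X # \<zeta> @ u) c" "redfree R u \<zeta>" using c(2) by (simp_all add: redfree_append redfree_Cons)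
  moreover have "Rset R (X # \<zeta> @ u) = Rset R (\<alpha> @ \<zeta> @ u)"
    by (rule Rset_bbisim[OF normed bbisim_sym[OF \<alpha>(2)]])
  ultimately have "redfree R (\<alpha> @ \<zeta> @ u) c" "redfree R u \<zeta>"
    using redfree_transfer[OF normed \<open>Rset R (X # \<zeta> @ u) = _\<close>] by simp_all
  then have "redfree R u (c @ \<alpha> @ \<zeta>)" using \<alpha>(1) by (simp add: redfree_append)
  with bb show ?thesis by (simp add: out_cands_def)
qed

lemma prime_at_canon_out_suffix:
  assumes c: "canon_out R u A = c @ X # \<zeta>"
  shows "prime_at R (\<zeta> @ u) X"
proof -
  have cand: "c @ X # \<zeta> \<in> out_cands R u A"
    using canon_out_in_out_cands[OF normed, of u A] c by simp
  then have not_absorbed: "\<not> bbisim R (X # \<zeta> @ u) (\<zeta> @ u)"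
    by (simp add: out_cands_def redfree_append redfree_Cons)
  have short: "length \<alpha> \<le> 1" if "redfree R (\<zeta> @ u) \<alpha>" "bbisim R (\<alpha> @ \<zeta> @ u) (X # \<zeta> @ u)" for \<alpha>
    using out_cands_length_le_canon_out[OF normed out_cands_replace[OF cand that]] c by simp
  have least: "\<not> Y < X" if Y: "bbisim R (Y # \<zeta> @ u) (X # \<zeta> @ u)" for Y
  proof
    assume "Y < X"
    have "\<not> bbisim R (Y # \<zeta> @ u) (\<zeta> @ u)"
      using not_absorbed bbisim_trans[OF bbisim_sym[OF Y]] by blast
    then have "redfree R (\<zeta> @ u) [Y]" by (simp add: redfree_Cons)
    with Y have "c @ [Y] @ \<zeta> \<in> out_cands R u A" by (intro out_cands_replace[OF cand]) simp_all
    moreover have "length (c @ [Y] @ \<zeta>) = length (canon_out R u A)" using c by simp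
    moreover have "c @ [Y] @ \<zeta> \<noteq> canon_out R u A" using c \<open>Y < X\<close> by simp
    ultimately have "lexless (canon_out R u A) (c @ [Y] @ \<zeta>)" by (rule canon_out_lexless[OF normed])
    moreover have "lexless (c @ [Y] @ \<zeta>) (canon_out R u A)"
      unfolding c lexless_def using \<open>Y < X\<close> by (metis append_Cons append_Nil)
    ultimately show False using lexless_asym c by (metis length_append list.size(4) append_Cons append_Nil)
  qed
  show ?thesis unfolding prime_at_def using not_absorbed short least by blast
qed

lemma normal_form_canon_out_append: "normal_form R u \<Longrightarrow> normal_form R (canon_out R u A @ u)"
  by (rule normal_form_append[OF prime_at_canon_out_suffix])

lemma normal_form_canon_out_word: "normal_form R (canon_out_word R w)"
proof (induction w)
  case (Cons A w)
  have "Rset R (canon_out_word R w) = Rset R w"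
    by (rule Rset_bbisim[OF normed canon_out_word_bbisim])
  then have "canon_out R w A = canon_out R (canon_out_word R w) A"
    by (rule canon_out_transfer[OF normed, symmetric])
  with normal_form_canon_out_append[OF Cons.IH] show ?case by simp
qed simp

end

theorem theorem4p7:
  fixes R :: "('v::{finite,linorder} \<times> 'a::finite option \<times> 'v list) set"
  assumes "finite R" and "normed R"
  shows "canon_T R \<alpha> = canon_T R \<beta> \<longleftrightarrow> bbisim R \<alpha> \<beta>"
proof -
  have "bbisim R \<alpha> \<beta> \<longleftrightarrow> bbisim R (canon_out_word R \<alpha>) (canon_out_word R \<beta>)"
    using canon_out_word_bbisim[OF assms(2)] bbisim_sym bbisim_trans by meson
  also have "\<dots> \<longleftrightarrow> canon_out_word R \<alpha> = canon_out_word R \<beta>"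
    using normal_form_unique[OF assms(2) normal_form_canon_out_word normal_form_canon_out_word]
      bbisim_refl assms(2) by metis
  finally show ?thesis by (simp add: canon_T_eq_canon_out_word[OF assms(2)])
qed

end
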